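(* Let $G$ be a connected graph of order $n$, let $\tau\geq 2$ be an integer, let $\alpha\in[\frac{1}{2},\frac{3}{4})$, and suppose $$n\geq\max\Big\{4\tau^2+5\tau+1,\ \frac{8\tau(1-\alpha)-2\alpha+1}{3-4\alpha}\Big\}.$$ If $\rho_{\alpha}(G)\geq\rho_{\alpha}\big(K_{\tau-1}\vee(K_{n-\tau}\cup K_{1})\big)$, then $G$ is $\tau$-tough, unless $G\cong K_{\tau-1}\vee(K_{n-\tau}\cup K_{1})$.
   Context: For a graph $G$, $A(G)$ is its adjacency matrix and $D(G)$ the diagonal matrix of vertex degrees. For $\alpha\in[0,1]$, $A_{\alpha}(G)=\alpha D(G)+(1-\alpha)A(G)$, and $\rho_{\alpha}(G)$ denotes the largest eigenvalue of $A_{\alpha}(G)$. $c(H)$ denotes the number of connected components of $H$. For a real $\tau>0$, a graph $G$ is $\tau$-tough if $|S|\geq\tau\,(c(G-S)-1)$ for every proper subset $S\subsetneq V(G)$ with $c(G-S)>1$ (a complete graph has no such $S$). $K_m$ is the complete graph on $m$ vertices, $\cup$ is disjoint union, and $G_1\vee G_2$ (join) is obtained from $G_1\cup G_2$ by adding all edges between $V(G_1)$ and $V(G_2)$. *)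

theory Defs
  imports "Jordan_Normal_Form.Matrix" "Jordan_Normal_Form.Char_Poly"
begin

definition graph :: "nat \<Rightarrow> (nat \<Rightarrow> nat \<Rightarrow> bool) \<Rightarrow> bool" where
  "graph n E \<longleftrightarrow> (\<forall>i j. E i j \<longrightarrow> i < n \<and> j < n) \<and> (\<forall>i j. E i j \<longleftrightarrow> E j i) \<and> (\<forall>i. \<not> E i i)"

definition degree :: "nat \<Rightarrow> (nat \<Rightarrow> nat \<Rightarrow> bool) \<Rightarrow> nat \<Rightarrow> nat" where
  "degree n E i = card {j. j < n \<and> E i j}"

definition adj_mat :: "nat \<Rightarrow> (nat \<Rightarrow> nat \<Rightarrow> bool) \<Rightarrow> real mat" where
  "adj_mat n E = mat n n (\<lambda>(i, j). if E i j then 1 else 0)"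

definition deg_mat :: "nat \<Rightarrow> (nat \<Rightarrow> nat \<Rightarrow> bool) \<Rightarrow> real mat" where
  "deg_mat n E = mat n n (\<lambda>(i, j). if i = j then real (degree n E i) else 0)"

definition A_alpha :: "real \<Rightarrow> nat \<Rightarrow> (nat \<Rightarrow> nat \<Rightarrow> bool) \<Rightarrow> real mat" where
  "A_alpha \<alpha> n E = \<alpha> \<cdot>\<^sub>m deg_mat n E + (1 - \<alpha>) \<cdot>\<^sub>m adj_mat n E"

definition largest_eigenvalue :: "real mat \<Rightarrow> real" where
  "largest_eigenvalue M = Max {\<mu>. eigenvalue M \<mu>}"

definition rho_alpha :: "real \<Rightarrow> nat \<Rightarrow> (nat \<Rightarrow> nat \<Rightarrow> bool) \<Rightarrow> real" where
  "rho_alpha \<alpha> n E = largest_eigenvalue (A_alpha \<alpha> n E)"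

definition components :: "(nat \<Rightarrow> nat \<Rightarrow> bool) \<Rightarrow> nat set \<Rightarrow> nat set set" where
  "components E S = (\<lambda>v. {w \<in> S. (\<lambda>x y. E x y \<and> x \<in> S \<and> y \<in> S)\<^sup>*\<^sup>* v w}) ` S"

definition num_components :: "(nat \<Rightarrow> nat \<Rightarrow> bool) \<Rightarrow> nat set \<Rightarrow> nat" where
  "num_components E S = card (components E S)"

definition connected_graph :: "nat \<Rightarrow> (nat \<Rightarrow> nat \<Rightarrow> bool) \<Rightarrow> bool" where
  "connected_graph n E \<longleftrightarrow> num_components E {0..<n} = 1"

definition tough :: "real \<Rightarrow> nat \<Rightarrow> (nat \<Rightarrow> nat \<Rightarrow> bool) \<Rightarrow> bool" where
  "tough \<tau> n E \<longleftrightarrow> (\<forall>S. S \<subset> {0..<n} \<and> num_components E ({0..<n} - S) > 1 \<longrightarrow>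
      real (card S) \<ge> \<tau> * (real (num_components E ({0..<n} - S)) - 1))"

definition graph_iso :: "nat \<Rightarrow> (nat \<Rightarrow> nat \<Rightarrow> bool) \<Rightarrow> (nat \<Rightarrow> nat \<Rightarrow> bool) \<Rightarrow> bool" where
  "graph_iso n E H \<longleftrightarrow> (\<exists>f. bij_betw f {0..<n} {0..<n} \<and>
      (\<forall>i<n. \<forall>j<n. E i j \<longleftrightarrow> H (f i) (f j)))"

text \<open>K_{t-1} join (K_{n-t} union K_1) on {0..<n}: vertices 0..t-2 form K_{t-1},
  vertices t-1..n-2 form K_{n-t}, vertex n-1 is the K_1.\<close>
definition extremal_graph :: "nat \<Rightarrow> nat \<Rightarrow> nat \<Rightarrow> nat \<Rightarrow> bool" where
  "extremal_graph t n i j \<longleftrightarrow> i < n \<and> j < n \<and> i \<noteq> j \<and>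
      (i < t - 1 \<or> j < t - 1 \<or> (i < n - 1 \<and> j < n - 1))"

end

theory Submission
  imports Defs "Jordan_Normal_Form.Spectral_Radius"
begin

text \<open>
  The extremal graph \<open>K\<^sub>\<tau>\<^sub>-\<^sub>1 \<or> (K\<^sub>n\<^sub>-\<^sub>\<tau> \<union> K\<^sub>1)\<close> has a positive eigenvector that is constant
  on each of its three parts, so its \<open>A\<^sub>\<alpha>\<close>-index is at least a root \<open>\<lambda> > n - 2\<close> of a
  three-variable eigenvalue system. Let \<open>\<rho>\<^sub>\<alpha>(G) \<ge> \<lambda>\<close>. If \<open>G\<close> has a vertex of degree
  \<open>< \<tau>\<close>, then \<open>G\<close> is a spanning subgraph of a copy of the extremal graph, and the
  Collatz-Wielandt bound with that positive eigenvector gives \<open>\<rho>\<^sub>\<alpha>(G) < \<lambda>\<close> unless \<open>G\<close> is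
  that copy. Otherwise \<open>G\<close> has minimum degree \<open>\<ge> \<tau>\<close>; if it were not \<open>\<tau>\<close>-tough, a set \<open>S\<close>
  with \<open>|S| < \<tau>(c(G - S) - 1)\<close> would leave only small components, and the test vector
  equal to 1 on \<open>S\<close> and to a small constant elsewhere would give \<open>\<rho>\<^sub>\<alpha>(G) \<le> n - 2\<close>.
  This uses only \<open>n \<ge> 4\<tau>\<^sup>2 + 5\<tau> + 1\<close> and \<open>\<alpha> < 3/4\<close>.
\<close>

section \<open>Eigenvalues of real symmetric matrices\<close>

lemma eigenvalue_iff_sum:
  fixes A :: "'a::comm_ring_1 mat"
  assumes A: "A \<in> carrier_mat n n"
  shows "eigenvalue A \<mu> \<longleftrightarrow>
    (\<exists>f. (\<exists>i<n. f i \<noteq> 0) \<and> (\<forall>i<n. (\<Sum>j<n. A $$ (i, j) * f j) = \<mu> * f i))"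
proof
  assume "eigenvalue A \<mu>"
  then obtain v where v: "v \<in> carrier_vec n" "v \<noteq> 0\<^sub>v n" "A *\<^sub>v v = \<mu> \<cdot>\<^sub>v v"
    using A unfolding eigenvalue_def eigenvector_def by auto
  have "\<exists>i<n. v $ i \<noteq> 0"
    using v(1,2) by (metis carrier_vecD eq_vecI index_zero_vec)
  moreover have "(\<Sum>j<n. A $$ (i, j) * v $ j) = \<mu> * v $ i" if "i < n" for i
    using arg_cong[OF v(3), of "\<lambda>u. u $ i"] A v(1) that
    by (simp add: scalar_prod_def atLeast0LessThan)
  ultimately show "\<exists>f. (\<exists>i<n. f i \<noteq> 0) \<and> (\<forall>i<n. (\<Sum>j<n. A $$ (i, j) * f j) = \<mu> * f i)"
    by blast
next
  assume "\<exists>f. (\<exists>i<n. f i \<noteq> 0) \<and> (\<forall>i<n. (\<Sum>j<n. A $$ (i, j) * f j) = \<mu> * f i)"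
  then obtain f where f: "\<exists>i<n. f i \<noteq> 0" "\<And>i. i < n \<Longrightarrow> (\<Sum>j<n. A $$ (i, j) * f j) = \<mu> * f i"
    by blast
  have "vec n f \<noteq> 0\<^sub>v n" using f(1) by (auto simp: vec_eq_iff)
  moreover have "A *\<^sub>v vec n f = \<mu> \<cdot>\<^sub>v vec n f"
    using A f(2) by (auto simp: scalar_prod_def atLeast0LessThan)
  ultimately show "eigenvalue A \<mu>"
    using A unfolding eigenvalue_def eigenvector_def by (auto intro!: exI[of _ "vec n f"])
qed

text \<open>For an eigenpair (z, w) the number \<open>w\<^sup>* A w = z |w|\<^sup>2\<close> is its own conjugate.\<close>

lemma real_symmetric_complex_eigenvalue_real:
  fixes a :: "nat \<Rightarrow> nat \<Rightarrow> real" and w :: "nat \<Rightarrow> complex"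
  assumes sym: "\<And>i j. i < n \<Longrightarrow> j < n \<Longrightarrow> a i j = a j i"
    and w: "\<exists>i<n. w i \<noteq> 0"
    and eig: "\<And>i. i < n \<Longrightarrow> (\<Sum>j<n. of_real (a i j) * w j) = z * w i"
  shows "Im z = 0"
proof -
  define Q where "Q = (\<Sum>i<n. \<Sum>j<n. cnj (w i) * of_real (a i j) * w j)"
  define r where "r = (\<Sum>i<n. (cmod (w i))\<^sup>2)"
  have "Q = (\<Sum>i<n. cnj (w i) * (\<Sum>j<n. of_real (a i j) * w j))"
    unfolding Q_def by (simp add: sum_distrib_left mult.assoc)
  also have "\<dots> = (\<Sum>i<n. z * (cnj (w i) * w i))"
    using eig by (simp add: mult_ac)
  also have "\<dots> = z * of_real r"
    unfolding r_def of_real_sum sum_distrib_left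
    by (intro sum.cong refl) (metis complex_norm_square mult.commute)
  finally have Qr: "Q = z * of_real r" .
  have "cnj Q = (\<Sum>i<n. \<Sum>j<n. cnj (w j) * of_real (a i j) * w i)"
    unfolding Q_def cnj_sum by (simp add: mult_ac)
  also have "\<dots> = (\<Sum>j<n. \<Sum>i<n. cnj (w j) * of_real (a j i) * w i)"
    by (subst sum.swap, intro sum.cong refl) (simp add: sym)
  finally have "cnj Q = Q" unfolding Q_def .
  hence "Im (cnj Q) = Im Q" by simp
  hence "Im Q = 0" by simp
  moreover have "r > 0"
  proof -
    obtain i where i: "i < n" "w i \<noteq> 0" using w by blast
    have "(cmod (w i))\<^sup>2 \<le> r" unfolding r_def by (rule member_le_sum) (use i in auto)
    moreover have "(cmod (w i))\<^sup>2 > 0" using i by simp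
    ultimately show ?thesis by linarith
  qed
  ultimately show ?thesis using Qr by simp
qed

lemma real_symmetric_has_eigenvalue:
  fixes A :: "real mat"
  assumes A: "A \<in> carrier_mat n n" and n: "n > 0"
    and sym: "\<And>i j. i < n \<Longrightarrow> j < n \<Longrightarrow> A $$ (i, j) = A $$ (j, i)"
  shows "\<exists>\<mu>. eigenvalue A \<mu>"
proof -
  have AC: "map_mat complex_of_real A \<in> carrier_mat n n" using A by simp
  obtain z where "eigenvalue (map_mat complex_of_real A) z"
    using spectrum_non_empty[OF AC n] unfolding spectrum_def by auto
  then obtain w where w: "\<exists>i<n. w i \<noteq> 0"
    and eig: "\<And>i. i < n \<Longrightarrow> (\<Sum>j<n. of_real (A $$ (i, j)) * w j) = z * w i"
    unfolding eigenvalue_iff_sum[OF AC] using A by auto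
  have "Im z = 0" by (rule real_symmetric_complex_eigenvalue_real[OF sym w eig])
  hence re: "(\<Sum>j<n. A $$ (i, j) * Re (w j)) = Re z * Re (w i)"
    and im: "(\<Sum>j<n. A $$ (i, j) * Im (w j)) = Re z * Im (w i)" if "i < n" for i
    using arg_cong[OF eig[OF that], of Re] arg_cong[OF eig[OF that], of Im]
    by (simp_all add: Re_sum Im_sum)
  obtain i where i: "i < n" "w i \<noteq> 0" using w by blast
  show ?thesis
  proof (cases "\<exists>i<n. Re (w i) \<noteq> 0")
    case True
    hence "eigenvalue A (Re z)"
      unfolding eigenvalue_iff_sum[OF A] using re by (intro exI[of _ "\<lambda>j. Re (w j)"]) auto
    thus ?thesis ..
  next
    case False
    hence "\<exists>i<n. Im (w i) \<noteq> 0" using i by (auto simp: complex_eq_iff)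
    hence "eigenvalue A (Re z)"
      unfolding eigenvalue_iff_sum[OF A] using im by (intro exI[of _ "\<lambda>j. Im (w j)"]) auto
    thus ?thesis ..
  qed
qed

lemma symmetric_pairing_identity:
  fixes M :: "nat \<Rightarrow> nat \<Rightarrow> real"
  assumes sym: "\<And>i j. i < n \<Longrightarrow> j < n \<Longrightarrow> M i j = M j i"
  shows "(\<Sum>i<n. x i * ((\<Sum>j<n. M i j * y j) - \<mu> * y i))
      + (\<Sum>j<n. y j * (lam * x j - (\<Sum>i<n. M j i * x i)))
    = (lam - \<mu>) * (\<Sum>i<n. x i * y i)"
proof -
  have "(\<Sum>i<n. x i * (\<Sum>j<n. M i j * y j)) = (\<Sum>i<n. \<Sum>j<n. x i * M i j * y j)"
    by (simp add: sum_distrib_left mult.assoc)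
  also have "\<dots> = (\<Sum>j<n. \<Sum>i<n. x i * M i j * y j)"
    by (rule sum.swap)
  also have "\<dots> = (\<Sum>j<n. y j * (\<Sum>i<n. M j i * x i))"
    unfolding sum_distrib_left by (intro sum.cong refl) (simp add: sym)
  finally have swap: "(\<Sum>i<n. x i * (\<Sum>j<n. M i j * y j)) = (\<Sum>j<n. y j * (\<Sum>i<n. M j i * x i))" .
  have "(\<Sum>i<n. x i * ((\<Sum>j<n. M i j * y j) - \<mu> * y i))
      = (\<Sum>i<n. x i * (\<Sum>j<n. M i j * y j)) - \<mu> * (\<Sum>i<n. x i * y i)"
    unfolding right_diff_distrib sum_subtractf sum_distrib_left by (simp add: mult.left_commute)
  moreover have "(\<Sum>j<n. y j * (lam * x j - (\<Sum>i<n. M j i * x i)))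
      = lam * (\<Sum>i<n. x i * y i) - (\<Sum>j<n. y j * (\<Sum>i<n. M j i * x i))"
    unfolding right_diff_distrib sum_subtractf sum_distrib_left by (simp add: mult_ac)
  ultimately show ?thesis using swap by (simp add: left_diff_distrib)
qed

text \<open>In the identity above with \<open>y = |v|\<close> and \<open>|\<mu>|\<close> in place of \<open>\<mu>\<close>, all terms on the left
  are nonnegative.\<close>

lemma collatz_wielandt:
  fixes M :: "nat \<Rightarrow> nat \<Rightarrow> real" and x v :: "nat \<Rightarrow> real"
  assumes sym: "\<And>i j. i < n \<Longrightarrow> j < n \<Longrightarrow> M i j = M j i"
    and nonneg: "\<And>i j. i < n \<Longrightarrow> j < n \<Longrightarrow> 0 \<le> M i j"
    and x_pos: "\<And>i. i < n \<Longrightarrow> 0 < x i"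
    and sub: "\<And>i. i < n \<Longrightarrow> (\<Sum>j<n. M i j * x j) \<le> lam * x i"
    and v: "\<exists>i<n. v i \<noteq> 0"
    and eig: "\<And>i. i < n \<Longrightarrow> (\<Sum>j<n. M i j * v j) = \<mu> * v i"
  shows "\<mu> \<le> lam"
    and "\<mu> = lam \<Longrightarrow> i < n \<Longrightarrow> v i \<noteq> 0 \<Longrightarrow> (\<Sum>j<n. M i j * x j) = lam * x i"
    and "\<mu> = lam \<Longrightarrow> i < n \<Longrightarrow> (\<Sum>j<n. M i j * \<bar>v j\<bar>) = lam * \<bar>v i\<bar>"
proof -
  define a where "a i = (\<Sum>j<n. M i j * \<bar>v j\<bar>) - \<bar>\<mu>\<bar> * \<bar>v i\<bar>" for i
  define b where "b j = lam * x j - (\<Sum>i<n. M j i * x i)" for j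
  define P where "P = (\<Sum>i<n. x i * \<bar>v i\<bar>)"
  have identity: "(\<Sum>i<n. x i * a i) + (\<Sum>j<n. \<bar>v j\<bar> * b j) = (lam - \<bar>\<mu>\<bar>) * P"
    unfolding a_def b_def P_def by (rule symmetric_pairing_identity[OF sym])
  have xa_nonneg: "0 \<le> x i * a i" if "i < n" for i
  proof -
    have "\<bar>\<mu>\<bar> * \<bar>v i\<bar> = \<bar>\<Sum>j<n. M i j * v j\<bar>" using eig[OF that] by (simp add: abs_mult)
    also have "\<dots> \<le> (\<Sum>j<n. M i j * \<bar>v j\<bar>)"
      using sum_abs[of "\<lambda>j. M i j * v j" "{..<n}"] nonneg[OF that] by (simp add: abs_mult)
    finally show ?thesis using x_pos[OF that] unfolding a_def by simp
  qed
  have vb_nonneg: "0 \<le> \<bar>v i\<bar> * b i" if "i < n" for i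
    using sub[OF that] unfolding b_def by simp
  have "P > 0"
  proof -
    obtain k where k: "k < n" "v k \<noteq> 0" using v by blast
    have "x k * \<bar>v k\<bar> \<le> P"
      unfolding P_def by (rule member_le_sum) (use k in \<open>auto intro!: mult_nonneg_nonneg less_imp_le[OF x_pos]\<close>)
    moreover have "0 < x k * \<bar>v k\<bar>" using k x_pos by simp
    ultimately show ?thesis by linarith
  qed
  have xa: "0 \<le> (\<Sum>i<n. x i * a i)" and vb: "0 \<le> (\<Sum>j<n. \<bar>v j\<bar> * b j)"
    by (rule sum_nonneg, simp add: xa_nonneg vb_nonneg)+
  with identity have "0 \<le> (lam - \<bar>\<mu>\<bar>) * P" by linarith
  with \<open>P > 0\<close> have "\<bar>\<mu>\<bar> \<le> lam" by (simp add: zero_le_mult_iff)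
  thus "\<mu> \<le> lam" by linarith
  assume "\<mu> = lam"
  with \<open>\<bar>\<mu>\<bar> \<le> lam\<close> have "\<bar>\<mu>\<bar> = lam" by linarith
  hence "(\<Sum>i<n. x i * a i) + (\<Sum>j<n. \<bar>v j\<bar> * b j) = 0" unfolding identity by simp
  hence "(\<Sum>i<n. x i * a i) = 0 \<and> (\<Sum>j<n. \<bar>v j\<bar> * b j) = 0"
    by (simp only: add_nonneg_eq_0_iff[OF xa vb])
  hence "\<forall>i\<in>{..<n}. x i * a i = 0" "\<forall>i\<in>{..<n}. \<bar>v i\<bar> * b i = 0"
    using sum_nonneg_eq_0_iff[of "{..<n}" "\<lambda>i. x i * a i"]
      sum_nonneg_eq_0_iff[of "{..<n}" "\<lambda>i. \<bar>v i\<bar> * b i"] xa_nonneg vb_nonneg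
    by auto
  assume "i < n"
  hence "\<bar>v i\<bar> * b i = 0" "x i * a i = 0"
    using \<open>\<forall>i\<in>{..<n}. \<bar>v i\<bar> * b i = 0\<close> \<open>\<forall>i\<in>{..<n}. x i * a i = 0\<close> by blast+
  show "v i \<noteq> 0 \<Longrightarrow> (\<Sum>j<n. M i j * x j) = lam * x i"
    using \<open>\<bar>v i\<bar> * b i = 0\<close> unfolding b_def by simp
  show "(\<Sum>j<n. M i j * \<bar>v j\<bar>) = lam * \<bar>v i\<bar>"
    using \<open>x i * a i = 0\<close> x_pos[OF \<open>i < n\<close>] \<open>\<bar>\<mu>\<bar> = lam\<close> unfolding a_def by simp
qed

section \<open>Neighbourhoods and components\<close>

definition neighbours :: "nat \<Rightarrow> (nat \<Rightarrow> nat \<Rightarrow> bool) \<Rightarrow> nat \<Rightarrow> nat set" where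
  "neighbours n E u = {j. j < n \<and> E u j}"

lemma degree_eq_card_neighbours: "degree n E u = card (neighbours n E u)"
  unfolding degree_def neighbours_def ..

lemma neighbours_subset: "graph n E \<Longrightarrow> neighbours n E u \<subseteq> {..<n} - {u}"
  unfolding neighbours_def graph_def by auto

definition component_of :: "(nat \<Rightarrow> nat \<Rightarrow> bool) \<Rightarrow> nat set \<Rightarrow> nat \<Rightarrow> nat set" where
  "component_of E T v = {w \<in> T. (\<lambda>x y. E x y \<and> x \<in> T \<and> y \<in> T)\<^sup>*\<^sup>* v w}"

lemma components_eq_image: "components E T = component_of E T ` T"
  unfolding components_def component_of_def ..

lemma component_of_self: "v \<in> T \<Longrightarrow> v \<in> component_of E T v"
  unfolding component_of_def by simp

lemma component_of_subset: "component_of E T v \<subseteq> T"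
  unfolding component_of_def by auto

lemma component_of_eq:
  assumes "graph n E" and w: "w \<in> component_of E T v"
  shows "component_of E T w = component_of E T v"
proof -
  let ?R = "\<lambda>x y. E x y \<and> x \<in> T \<and> y \<in> T"
  have "symp ?R" using \<open>graph n E\<close> unfolding graph_def by (auto intro: sympI)
  moreover have "?R\<^sup>*\<^sup>* v w" using w unfolding component_of_def by simp
  ultimately have "?R\<^sup>*\<^sup>* w v" by (simp add: symp_rtranclp sympD)
  with \<open>?R\<^sup>*\<^sup>* v w\<close> show ?thesis
    unfolding component_of_def by (auto intro: rtranclp_trans)
qed

lemma neighbours_inter_subset_component_of:
  "u \<in> T \<Longrightarrow> neighbours n E u \<inter> T \<subseteq> component_of E T u"
  unfolding neighbours_def component_of_def by auto

text \<open>Every component other than that of \<open>u\<close> has a representative outside it.\<close>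

lemma card_component_of_le:
  assumes "graph n E" and T: "finite T" and u: "u \<in> T"
  shows "card (component_of E T u) + (num_components E T - 1) \<le> card T"
proof -
  let ?C = "component_of E T"
  have "components E T - {?C u} \<subseteq> ?C ` (T - ?C u)"
    unfolding components_eq_image using component_of_eq[OF \<open>graph n E\<close>] by blast
  hence "card (components E T - {?C u}) \<le> card (T - ?C u)"
    using T by (meson card_image_le card_mono finite_Diff finite_imageI le_trans)
  moreover have "?C u \<in> components E T" using u by (simp add: components_eq_image)
  moreover have "card (T - ?C u) = card T - card (?C u)"
    by (rule card_Diff_subset[OF finite_subset[OF component_of_subset T] component_of_subset])
  moreover have "card (?C u) \<le> card T" using T by (simp add: card_mono component_of_subset)
  ultimately show ?thesis unfolding num_components_def using T by (simp add: components_eq_image)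
qed

lemma connected_graph_induct:
  assumes "connected_graph n E" and "k < n" "j < n" and "P k"
    and step: "\<And>i j. i < n \<Longrightarrow> j < n \<Longrightarrow> E i j \<Longrightarrow> P i \<Longrightarrow> P j"
  shows "P j"
proof -
  let ?R = "\<lambda>x y. E x y \<and> x \<in> {0..<n} \<and> y \<in> {0..<n}"
  obtain C where C: "components E {0..<n} = {C}"
    using assms(1) unfolding connected_graph_def num_components_def by (meson card_1_singletonE)
  have "component_of E {0..<n} k = C" "component_of E {0..<n} j = C"
    using C assms(2,3) unfolding components_eq_image by auto
  hence "j \<in> component_of E {0..<n} k" using component_of_self assms(3) by (metis atLeastLessThan_iff zero_le)
  hence "?R\<^sup>*\<^sup>* k j" unfolding component_of_def by simp
  thus ?thesis
    by (induction rule: rtranclp_induct) (use \<open>P k\<close> step in auto)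
qed

section \<open>The matrix \<open>A\<^sub>\<alpha>\<close> and its largest eigenvalue\<close>

lemma A_alpha_carrier: "A_alpha \<alpha> n E \<in> carrier_mat n n"
  unfolding A_alpha_def deg_mat_def adj_mat_def by simp

lemma A_alpha_index:
  "i < n \<Longrightarrow> j < n \<Longrightarrow> A_alpha \<alpha> n E $$ (i, j) =
    (if i = j then \<alpha> * real (degree n E i) else 0) + (1 - \<alpha>) * (if E i j then 1 else 0)"
  unfolding A_alpha_def deg_mat_def adj_mat_def by simp

lemma A_alpha_row:
  assumes "u < n"
  shows "(\<Sum>j<n. A_alpha \<alpha> n E $$ (u, j) * x j)
    = \<alpha> * real (degree n E u) * x u + (1 - \<alpha>) * (\<Sum>j\<in>neighbours n E u. x j)"
proof -
  have "(\<Sum>j<n. A_alpha \<alpha> n E $$ (u, j) * x j)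
      = (\<Sum>j<n. (if u = j then \<alpha> * real (degree n E u) * x j else 0)
        + (1 - \<alpha>) * (if E u j then x j else 0))"
    using assms by (intro sum.cong refl) (simp add: A_alpha_index distrib_right)
  also have "\<dots> = \<alpha> * real (degree n E u) * x u + (1 - \<alpha>) * (\<Sum>j<n. if E u j then x j else 0)"
    using assms by (simp add: sum.distrib sum_distrib_left[symmetric])
  also have "(\<Sum>j<n. if E u j then x j else 0) = (\<Sum>j\<in>neighbours n E u. x j)"
    unfolding sum.inter_filter[OF finite_lessThan, symmetric] neighbours_def by simp
  finally show ?thesis .
qed

lemma A_alpha_row_le:
  assumes "u < n" and "neighbours n E u \<subseteq> K" "K \<subseteq> {..<n}"
    and "0 \<le> \<alpha>" "\<alpha> \<le> 1" and x: "\<And>j. j < n \<Longrightarrow> 0 \<le> x j"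
  shows "(\<Sum>j<n. A_alpha \<alpha> n E $$ (u, j) * x j) \<le> \<alpha> * real (card K) * x u + (1 - \<alpha>) * (\<Sum>j\<in>K. x j)"
proof -
  have "finite K" using assms(3) finite_subset by blast
  hence "degree n E u \<le> card K" unfolding degree_eq_card_neighbours using assms(2) by (rule card_mono)
  hence "\<alpha> * real (degree n E u) * x u \<le> \<alpha> * real (card K) * x u"
    using assms(1,4) x by (simp add: mult_left_mono mult_right_mono)
  moreover have "(\<Sum>j\<in>neighbours n E u. x j) \<le> (\<Sum>j\<in>K. x j)"
    using \<open>finite K\<close> assms(2,3) x by (intro sum_mono2) auto
  ultimately show ?thesis unfolding A_alpha_row[OF assms(1)]
    using assms(5) by (smt (verit) mult_left_mono)
qed

lemma A_alpha_row_less: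
  assumes "u < n" and "neighbours n E u \<subseteq> K" "K \<subseteq> {..<n}"
    and "0 \<le> \<alpha>" "\<alpha> < 1" and x: "\<And>j. j < n \<Longrightarrow> 0 < x j"
    and b: "b \<in> K" "b \<notin> neighbours n E u"
  shows "(\<Sum>j<n. A_alpha \<alpha> n E $$ (u, j) * x j) < \<alpha> * real (card K) * x u + (1 - \<alpha>) * (\<Sum>j\<in>K. x j)"
proof -
  have "finite K" using assms(3) finite_subset by blast
  have "(\<Sum>j<n. A_alpha \<alpha> n E $$ (u, j) * x j)
      \<le> \<alpha> * real (card (K - {b})) * x u + (1 - \<alpha>) * (\<Sum>j\<in>K - {b}. x j)"
    using assms(2-5) b x by (intro A_alpha_row_le[OF assms(1)]) (auto intro: less_imp_le)
  also have "\<dots> < \<alpha> * real (card K) * x u + (1 - \<alpha>) * (\<Sum>j\<in>K. x j)"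
  proof -
    have "\<alpha> * real (card (K - {b})) * x u \<le> \<alpha> * real (card K) * x u"
      using \<open>finite K\<close> assms(1,4) x by (intro mult_right_mono mult_left_mono) (auto intro: less_imp_le card_mono)
    moreover have "(\<Sum>j\<in>K. x j) = x b + (\<Sum>j\<in>K - {b}. x j)"
      using \<open>finite K\<close> b(1) by (simp add: sum.remove)
    moreover have "0 < (1 - \<alpha>) * x b" using assms(3,5) b(1) x by auto
    ultimately show ?thesis by (simp add: algebra_simps)
  qed
  finally show ?thesis .
qed

lemma A_alpha_symmetric:
  "graph n E \<Longrightarrow> i < n \<Longrightarrow> j < n \<Longrightarrow> A_alpha \<alpha> n E $$ (i, j) = A_alpha \<alpha> n E $$ (j, i)"
  unfolding graph_def by (auto simp: A_alpha_index)

lemma A_alpha_nonneg: "0 \<le> \<alpha> \<Longrightarrow> \<alpha> \<le> 1 \<Longrightarrow> i < n \<Longrightarrow> j < n \<Longrightarrow> 0 \<le> A_alpha \<alpha> n E $$ (i, j)"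
  by (simp add: A_alpha_index)

lemma eigenvalue_le_rho_alpha:
  "eigenvalue (A_alpha \<alpha> n E) \<mu> \<Longrightarrow> \<mu> \<le> rho_alpha \<alpha> n E"
  using card_finite_spectrum(1)[OF A_alpha_carrier]
  unfolding rho_alpha_def largest_eigenvalue_def spectrum_def by (simp add: Max_ge)

lemma rho_alpha_eigenvalue:
  assumes "graph n E" "0 < n"
  shows "eigenvalue (A_alpha \<alpha> n E) (rho_alpha \<alpha> n E)"
proof -
  have "\<exists>\<mu>. eigenvalue (A_alpha \<alpha> n E) \<mu>"
    using assms by (intro real_symmetric_has_eigenvalue[OF A_alpha_carrier]) (auto intro: A_alpha_symmetric)
  hence "{\<mu>. eigenvalue (A_alpha \<alpha> n E) \<mu>} \<noteq> {}" by blast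
  with card_finite_spectrum(1)[OF A_alpha_carrier, of \<alpha> n E]
  have "Max {\<mu>. eigenvalue (A_alpha \<alpha> n E) \<mu>} \<in> {\<mu>. eigenvalue (A_alpha \<alpha> n E) \<mu>}"
    unfolding spectrum_def by (intro Max_in) auto
  thus ?thesis unfolding rho_alpha_def largest_eigenvalue_def by simp
qed

lemma rho_alpha_eigenvector:
  assumes "graph n E" "0 < n"
  obtains v where "\<exists>i<n. v i \<noteq> 0"
    "\<forall>i<n. (\<Sum>j<n. A_alpha \<alpha> n E $$ (i, j) * v j) = rho_alpha \<alpha> n E * v i"
  using rho_alpha_eigenvalue[OF assms, where \<alpha> = \<alpha>]
  unfolding eigenvalue_iff_sum[OF A_alpha_carrier] by blast

lemma rho_alpha_le:
  assumes "graph n E" "0 < n" "0 \<le> \<alpha>" "\<alpha> \<le> 1"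
    and "\<And>i. i < n \<Longrightarrow> 0 < x i"
    and "\<And>i. i < n \<Longrightarrow> (\<Sum>j<n. A_alpha \<alpha> n E $$ (i, j) * x j) \<le> lam * x i"
  shows "rho_alpha \<alpha> n E \<le> lam"
proof -
  obtain v where v: "\<exists>i<n. v i \<noteq> 0"
    and "\<forall>i<n. (\<Sum>j<n. A_alpha \<alpha> n E $$ (i, j) * v j) = rho_alpha \<alpha> n E * v i"
    by (rule rho_alpha_eigenvector[OF assms(1,2)])
  hence "\<And>i. i < n \<Longrightarrow> (\<Sum>j<n. A_alpha \<alpha> n E $$ (i, j) * v j) = rho_alpha \<alpha> n E * v i"
    by blast
  with A_alpha_symmetric[OF assms(1)] A_alpha_nonneg[OF assms(3,4)] assms(5,6) v
  show ?thesis by (rule collatz_wielandt(1))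
qed

text \<open>In the equality case the zero set of the Perron vector is closed under adjacency.\<close>

lemma rho_alpha_less:
  assumes "graph n E" "connected_graph n E" "0 \<le> \<alpha>" "\<alpha> < 1"
    and x: "\<And>i. i < n \<Longrightarrow> 0 < x i"
    and sub: "\<And>i. i < n \<Longrightarrow> (\<Sum>j<n. A_alpha \<alpha> n E $$ (i, j) * x j) \<le> lam * x i"
    and k: "k < n" "(\<Sum>j<n. A_alpha \<alpha> n E $$ (k, j) * x j) < lam * x k"
  shows "rho_alpha \<alpha> n E < lam"
proof -
  let ?M = "\<lambda>i j. A_alpha \<alpha> n E $$ (i, j)"
  obtain v where v: "\<exists>i<n. v i \<noteq> 0"
    and "\<forall>i<n. (\<Sum>j<n. ?M i j * v j) = rho_alpha \<alpha> n E * v i"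
    using rho_alpha_eigenvector[OF assms(1)] k(1) by (metis gr_zeroI not_less_zero)
  hence eig: "\<And>i. i < n \<Longrightarrow> (\<Sum>j<n. ?M i j * v j) = rho_alpha \<alpha> n E * v i" by blast
  have sym: "\<And>i j. i < n \<Longrightarrow> j < n \<Longrightarrow> ?M i j = ?M j i"
    by (rule A_alpha_symmetric[OF assms(1)])
  have nonneg: "\<And>i j. i < n \<Longrightarrow> j < n \<Longrightarrow> 0 \<le> ?M i j"
    using assms(3,4) by (simp add: A_alpha_nonneg)
  have "rho_alpha \<alpha> n E \<le> lam"
    using sym nonneg x sub v eig by (rule collatz_wielandt(1))
  show ?thesis
  proof (rule ccontr)
    assume "\<not> ?thesis"
    with \<open>rho_alpha \<alpha> n E \<le> lam\<close> have eq: "rho_alpha \<alpha> n E = lam" by simp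
    have "v k = 0"
    proof (rule ccontr)
      assume "v k \<noteq> 0"
      with sym nonneg x sub v eig eq k(1) have "(\<Sum>j<n. ?M k j * x j) = lam * x k"
        by (rule collatz_wielandt(2))
      with k(2) show False by simp
    qed
    moreover have "v j = 0" if "i < n" "j < n" "E i j" "v i = 0" for i j
    proof -
      have "(\<Sum>l<n. ?M i l * \<bar>v l\<bar>) = lam * \<bar>v i\<bar>"
        using sym nonneg x sub v eig eq \<open>i < n\<close> by (rule collatz_wielandt(3))
      hence "(\<Sum>l<n. ?M i l * \<bar>v l\<bar>) = 0" using \<open>v i = 0\<close> by simp
      hence "?M i j * \<bar>v j\<bar> = 0"
        using that nonneg by (subst (asm) sum_nonneg_eq_0_iff) auto
      moreover have "?M i j = 1 - \<alpha>"
        using that assms(1) by (auto simp: A_alpha_index graph_def)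
      ultimately show ?thesis using assms(4) by simp
    qed
    ultimately have "v j = 0" if "j < n" for j
      using connected_graph_induct[OF assms(2) k(1) that, of "\<lambda>i. v i = 0"] by blast
    thus False using v by blast
  qed
qed

section \<open>The extremal graph\<close>

text \<open>\<open>join_graph n A w\<close> is \<open>K\<^sub>A \<or> (K\<^sub>B \<union> K\<^sub>1)\<close> on \<open>V = {0..<n}\<close>, where \<open>B = V - A - {w}\<close> and
  \<open>w\<close> is the vertex of \<open>K\<^sub>1\<close>; the extremal graph is the case \<open>A = {0..<\<tau> - 1}\<close>, \<open>w = n - 1\<close>.\<close>

definition join_graph :: "nat \<Rightarrow> nat set \<Rightarrow> nat \<Rightarrow> nat \<Rightarrow> nat \<Rightarrow> bool" where
  "join_graph n A w i j \<longleftrightarrow> i < n \<and> j < n \<and> i \<noteq> j \<and> (i \<in> A \<or> j \<in> A \<or> (i \<noteq> w \<and> j \<noteq> w))"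

lemma graph_join_graph: "graph n (join_graph n A w)"
  unfolding graph_def join_graph_def by auto

lemma extremal_graph_eq_join_graph: "extremal_graph \<tau> n = join_graph n {..<\<tau> - 1} (n - 1)"
  unfolding extremal_graph_def join_graph_def by (intro ext) auto

lemma neighbours_join_graph:
  assumes "A \<subseteq> {..<n}" "w \<notin> A" "u < n"
  shows "neighbours n (join_graph n A w) u =
    (if u \<in> A then {..<n} - {u} else if u = w then A else {..<n} - {u, w})"
  using assms unfolding neighbours_def join_graph_def by auto

lemma join_graph_iso:
  assumes A: "A \<subseteq> {..<n}" "w < n" "w \<notin> A" and A': "A' \<subseteq> {..<n}" "w' < n" "w' \<notin> A'"
    and card: "card A = card A'"
  shows "graph_iso n (join_graph n A w) (join_graph n A' w')"
proof -
  define B where "B = {..<n} - A - {w}"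
  define B' where "B' = {..<n} - A' - {w'}"
  have "finite A" using A(1) finite_subset by blast
  have "card B = card B'"
    using A A' card \<open>finite A\<close> finite_subset[OF A'(1)]
    unfolding B_def B'_def by (simp add: card_Diff_subset card_Diff_singleton)
  obtain g where g: "bij_betw g A A'"
    using finite_same_card_bij[OF \<open>finite A\<close> _ card] finite_subset[OF A'(1)] by blast
  obtain h where h: "bij_betw h B B'"
    using finite_same_card_bij[OF _ _ \<open>card B = card B'\<close>] unfolding B_def B'_def by blast
  define f where "f u = (if u \<in> A then g u else if u = w then w' else h u)" for u
  have "bij_betw f A A'" using g by (rule bij_betw_cong[THEN iffD1, rotated]) (simp add: f_def)
  moreover have "bij_betw f B B'"
    using h by (rule bij_betw_cong[THEN iffD1, rotated]) (simp add: f_def B_def)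
  moreover have "bij_betw f {w} {w'}" using A by (simp add: f_def)
  ultimately have "bij_betw f (A \<union> ({w} \<union> B)) (A' \<union> ({w'} \<union> B'))"
    by (intro bij_betw_combine) (auto simp: B'_def A')
  moreover have "A \<union> ({w} \<union> B) = {..<n}" "A' \<union> ({w'} \<union> B') = {..<n}"
    using A A' unfolding B_def B'_def by auto
  ultimately have f: "bij_betw f {..<n} {..<n}" by simp
  have "f i \<in> A' \<longleftrightarrow> i \<in> A" "f i = w' \<longleftrightarrow> i = w" if "i < n" for i
    using that A A' bij_betwE[OF g] bij_betwE[OF h] unfolding f_def B_def B'_def by auto
  moreover have "f i < n" "f i = f j \<longleftrightarrow> i = j" if "i < n" "j < n" for i j
    using f that unfolding bij_betw_def inj_on_def by auto
  ultimately have "join_graph n A w i j \<longleftrightarrow> join_graph n A' w' (f i) (f j)" if "i < n" "j < n" for i j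
    using that unfolding join_graph_def by metis
  with f show ?thesis unfolding graph_iso_def by (auto simp: atLeast0LessThan)
qed

lemma subgraph_join_graph_of_degree_le:
  assumes "graph n E" "w < n" "degree n E w \<le> m" "m < n"
  shows "\<exists>A. A \<subseteq> {..<n} - {w} \<and> card A = m \<and> (\<forall>i j. E i j \<longrightarrow> join_graph n A w i j)"
proof -
  have "card (neighbours n E w) \<le> m" "m \<le> card ({..<n} - {w})"
    using assms(2-4) by (simp_all add: degree_eq_card_neighbours)
  then obtain A where A: "neighbours n E w \<subseteq> A" "A \<subseteq> {..<n} - {w}" "card A = m"
    using exists_subset_between[OF _ _ neighbours_subset[OF assms(1)]] by blast
  have "join_graph n A w i j" if "E i j" for i j
    using that assms(1) A(1) unfolding graph_def join_graph_def neighbours_def by blast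
  with A(2,3) show ?thesis by blast
qed

definition join_vector :: "nat set \<Rightarrow> nat \<Rightarrow> real \<Rightarrow> real \<Rightarrow> nat \<Rightarrow> real" where
  "join_vector A w p q u = (if u \<in> A then 1 else if u = w then q else p)"

text \<open>The eigenvalue equations of \<open>A\<^sub>\<alpha>\<close> of \<open>join_graph\<close> for \<open>join_vector\<close>, read at a vertex
  of \<open>A\<close>, of \<open>B\<close> and at \<open>w\<close>, where \<open>N = n\<close> and \<open>T = |A| + 1\<close>.\<close>

definition join_eigen_equations :: "real \<Rightarrow> real \<Rightarrow> real \<Rightarrow> real \<Rightarrow> real \<Rightarrow> real \<Rightarrow> bool" where
  "join_eigen_equations \<alpha> N T lam p q \<longleftrightarrow>
    \<alpha> * (N - 1) + (1 - \<alpha>) * ((T - 2) + (N - T) * p + q) = lam \<and>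
    \<alpha> * (N - 2) * p + (1 - \<alpha>) * ((T - 1) + (N - T - 1) * p) = lam * p \<and>
    \<alpha> * (T - 1) * q + (1 - \<alpha>) * (T - 1) = lam * q"

text \<open>The values of \<open>p\<close> and \<open>q\<close> forced by the second and third equation, for a given \<open>\<lambda>\<close>.\<close>

definition join_p :: "real \<Rightarrow> real \<Rightarrow> real \<Rightarrow> real \<Rightarrow> real" where
  "join_p \<alpha> N T l = (1 - \<alpha>) * (T - 1) / ((l - (N - 2)) + (1 - \<alpha>) * (T - 1))"

definition join_q :: "real \<Rightarrow> real \<Rightarrow> real \<Rightarrow> real" where
  "join_q \<alpha> T l = (1 - \<alpha>) * (T - 1) / (l - \<alpha> * (T - 1))"

lemma join_p_join_q:
  fixes N T \<alpha> l :: real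
  assumes T: "2 \<le> T" "T + 1 \<le> N" and \<alpha>: "0 \<le> \<alpha>" "\<alpha> < 1" and l: "N - 2 \<le> l"
  defines "p \<equiv> join_p \<alpha> N T l" and "q \<equiv> join_q \<alpha> T l"
  shows "0 < p" "0 < q"
    and "\<alpha> * (N - 2) * p + (1 - \<alpha>) * ((T - 1) + (N - T - 1) * p) = l * p"
    and "\<alpha> * (T - 1) * q + (1 - \<alpha>) * (T - 1) = l * q"
proof -
  define D1 D2 where "D1 = (l - (N - 2)) + (1 - \<alpha>) * (T - 1)" and "D2 = l - \<alpha> * (T - 1)"
  have "0 < (1 - \<alpha>) * (T - 1)" using T \<alpha> by simp
  moreover have "(1 - \<alpha>) * (T - 1) \<le> D1" "(1 - \<alpha>) * (T - 1) \<le> D2"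
    using T l unfolding D1_def D2_def by (auto simp: algebra_simps)
  ultimately have "0 < D1" "0 < D2" by linarith+
  hence "p * D1 = (1 - \<alpha>) * (T - 1)" "q * D2 = (1 - \<alpha>) * (T - 1)"
    unfolding p_def q_def join_p_def join_q_def D1_def D2_def by simp_all
  show "0 < p" "0 < q" using \<open>0 < D1\<close> \<open>0 < D2\<close> \<open>0 < (1 - \<alpha>) * (T - 1)\<close>
    unfolding p_def q_def join_p_def join_q_def D1_def D2_def by simp_all
  have "\<alpha> * (N - 2) * p + (1 - \<alpha>) * ((T - 1) + (N - T - 1) * p) - l * p
      = (1 - \<alpha>) * (T - 1) - p * D1"
    unfolding D1_def by (simp add: algebra_simps)
  thus "\<alpha> * (N - 2) * p + (1 - \<alpha>) * ((T - 1) + (N - T - 1) * p) = l * p"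
    using \<open>p * D1 = _\<close> by simp
  have "\<alpha> * (T - 1) * q + (1 - \<alpha>) * (T - 1) - l * q = (1 - \<alpha>) * (T - 1) - q * D2"
    unfolding D2_def by (simp add: algebra_simps)
  thus "\<alpha> * (T - 1) * q + (1 - \<alpha>) * (T - 1) = l * q"
    using \<open>q * D2 = _\<close> by simp
qed

text \<open>With \<open>p\<close> and \<open>q\<close> eliminated, the first equation reads \<open>f \<lambda> = 0\<close>, and
  \<open>f (N - 2) > 0 > f (N - 1)\<close>.\<close>

lemma join_first_equation_root:
  fixes N T \<alpha> :: real
  assumes T: "2 \<le> T" "T + 1 \<le> N" and \<alpha>: "0 \<le> \<alpha>" "\<alpha> < 1"
  obtains l where "N - 2 < l"
    "\<alpha> * (N - 1) + (1 - \<alpha>) * ((T - 2) + (N - T) * join_p \<alpha> N T l + join_q \<alpha> T l) = l"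
proof -
  define \<beta> where "\<beta> = 1 - \<alpha>"
  have \<beta>: "0 < \<beta>" "0 < \<beta> * (T - 1)" using \<alpha> T unfolding \<beta>_def by auto
  define f where "f l = \<alpha> * (N - 1) + \<beta> * ((T - 2) + (N - T) * join_p \<alpha> N T l + join_q \<alpha> T l) - l"
    for l
  have "(l - (N - 2)) + \<beta> * (T - 1) \<noteq> 0" "l - \<alpha> * (T - 1) \<noteq> 0" if "l \<in> {N - 2..N - 1}" for l
    using that T \<beta>(2) unfolding \<beta>_def by (auto simp: algebra_simps)
  hence "continuous_on {N - 2..N - 1} f"
    unfolding f_def join_p_def join_q_def \<beta>_def[symmetric] by (intro continuous_intros) auto
  moreover have "f (N - 1) < 0"
  proof -
    have "join_p \<alpha> N T (N - 1) < 1" "join_q \<alpha> T (N - 1) < 1"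
      using \<beta> T \<alpha> unfolding join_p_def join_q_def \<beta>_def by (auto simp: algebra_simps)
    moreover have "(N - T) * join_p \<alpha> N T (N - 1) < N - T"
      using mult_strict_left_mono[OF calculation(1), of "N - T"] T by simp
    ultimately have "\<beta> * ((T - 2) + (N - T) * join_p \<alpha> N T (N - 1) + join_q \<alpha> T (N - 1))
        < \<beta> * (N - 1)" using \<beta>(1) by (intro mult_strict_left_mono) auto
    moreover have "\<alpha> * (N - 1) + \<beta> * (N - 1) = N - 1" unfolding \<beta>_def by (simp add: algebra_simps)
    ultimately show ?thesis unfolding f_def by linarith
  qed
  moreover have "0 < f (N - 2)"
  proof -
    have "join_p \<alpha> N T (N - 2) = 1" using \<alpha> T unfolding join_p_def by simp
    hence "f (N - 2) = \<alpha> + \<beta> * join_q \<alpha> T (N - 2)"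
      unfolding f_def \<beta>_def by (simp add: algebra_simps)
    moreover have "0 < join_q \<alpha> T (N - 2)"
      using join_p_join_q(2)[OF T \<alpha>] by simp
    ultimately show ?thesis using \<alpha>(1) mult_pos_pos[OF \<beta>(1)] by fastforce
  qed
  ultimately obtain l where l: "N - 2 \<le> l" "l \<le> N - 1" "f l = 0"
    using IVT2'[of f "N - 1" 0 "N - 2"] by force
  with \<open>0 < f (N - 2)\<close> have "N - 2 < l" by (cases "l = N - 2") auto
  with l(3) that show ?thesis unfolding f_def \<beta>_def by simp
qed

lemma join_eigen_equations_solvable:
  fixes N T \<alpha> :: real
  assumes "2 \<le> T" "T + 1 \<le> N" and "0 \<le> \<alpha>" "\<alpha> < 1"
  obtains lam p q where "N - 2 < lam" "0 < p" "0 < q" "join_eigen_equations \<alpha> N T lam p q"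
proof -
  obtain l where l: "N - 2 < l"
    "\<alpha> * (N - 1) + (1 - \<alpha>) * ((T - 2) + (N - T) * join_p \<alpha> N T l + join_q \<alpha> T l) = l"
    using join_first_equation_root[OF assms] by blast
  note pq = join_p_join_q[OF assms less_imp_le[OF l(1)]]
  show ?thesis
    using that[OF l(1) pq(1,2)] l(2) pq(3,4) unfolding join_eigen_equations_def by blast
qed

lemma sum_join_vector:
  assumes A: "A \<subseteq> {..<n}" "w < n" "w \<notin> A"
  shows "(\<Sum>j<n. join_vector A w p q j) = real (card A) + q + real (n - card A - 1) * p"
proof -
  define B where "B = {..<n} - A - {w}"
  have "finite A" using A(1) finite_subset by blast
  have "(\<Sum>j<n. join_vector A w p q j)
      = (\<Sum>j\<in>{..<n} - A. join_vector A w p q j) + (\<Sum>j\<in>A. join_vector A w p q j)"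
    using A(1) by (simp add: sum.subset_diff)
  moreover have "(\<Sum>j\<in>{..<n} - A. join_vector A w p q j)
      = join_vector A w p q w + (\<Sum>j\<in>B. join_vector A w p q j)"
    unfolding B_def using A(2,3) by (simp add: sum.remove)
  ultimately have "(\<Sum>j<n. join_vector A w p q j)
      = (\<Sum>j\<in>A. join_vector A w p q j) + join_vector A w p q w + (\<Sum>j\<in>B. join_vector A w p q j)"
    by simp
  moreover have "(\<Sum>j\<in>A. join_vector A w p q j) = real (card A)"
    by (simp add: join_vector_def)
  moreover have "(\<Sum>j\<in>B. join_vector A w p q j) = real (card B) * p"
    by (simp add: join_vector_def B_def)
  moreover have "card B = n - card A - 1"
    using A \<open>finite A\<close> unfolding B_def by (simp add: card_Diff_subset card_Diff_singleton)
  ultimately show ?thesis using A(3) by (simp add: join_vector_def)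
qed

lemma sum_join_vector_neighbours:
  assumes A: "A \<subseteq> {..<n}" "w < n" "w \<notin> A" and card: "card A = \<tau> - 1" and \<tau>: "2 \<le> \<tau>" "\<tau> < n"
    and u: "u < n"
  shows "u \<in> A \<Longrightarrow> (\<Sum>j\<in>{..<n} - {u}. join_vector A w p q j)
      = (real \<tau> - 2) + (real n - real \<tau>) * p + q"
    and "u \<notin> A \<Longrightarrow> u \<noteq> w \<Longrightarrow> (\<Sum>j\<in>{..<n} - {u, w}. join_vector A w p q j)
      = (real \<tau> - 1) + (real n - real \<tau> - 1) * p"
proof -
  let ?x = "join_vector A w p q"
  have total: "(\<Sum>j<n. ?x j) = (real \<tau> - 1) + q + (real n - real \<tau>) * p"
    using sum_join_vector[OF A] card \<tau> by (simp add: of_nat_diff)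
  have split_u: "(\<Sum>j<n. ?x j) = ?x u + (\<Sum>j\<in>{..<n} - {u}. ?x j)"
    using u by (simp add: sum.remove)
  show "u \<in> A \<Longrightarrow> (\<Sum>j\<in>{..<n} - {u}. ?x j) = (real \<tau> - 2) + (real n - real \<tau>) * p + q"
    using total split_u by (simp add: join_vector_def)
  assume "u \<notin> A" "u \<noteq> w"
  have "(\<Sum>j\<in>{..<n} - {u}. ?x j) = ?x w + (\<Sum>j\<in>{..<n} - {u} - {w}. ?x j)"
    using A(2) \<open>u \<noteq> w\<close> by (intro sum.remove) auto
  moreover have "{..<n} - {u} - {w} = {..<n} - {u, w}" by auto
  ultimately show "(\<Sum>j\<in>{..<n} - {u, w}. ?x j) = (real \<tau> - 1) + (real n - real \<tau> - 1) * p"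
    using total split_u \<open>u \<notin> A\<close> \<open>u \<noteq> w\<close> A(3) by (simp add: join_vector_def algebra_simps)
qed

lemma join_graph_eigenvector:
  assumes A: "A \<subseteq> {..<n}" "w < n" "w \<notin> A" and card: "card A = \<tau> - 1" and \<tau>: "2 \<le> \<tau>" "\<tau> < n"
    and eqs: "join_eigen_equations \<alpha> n \<tau> lam p q" and u: "u < n"
  shows "(\<Sum>j<n. A_alpha \<alpha> n (join_graph n A w) $$ (u, j) * join_vector A w p q j)
    = lam * join_vector A w p q u"
proof -
  let ?x = "join_vector A w p q"
  note row = A_alpha_row[OF u, of \<alpha> "join_graph n A w" ?x, unfolded degree_eq_card_neighbours
      neighbours_join_graph[OF A(1,3) u]]
  note sums = sum_join_vector_neighbours[OF A card \<tau> u]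
  consider (clique) "u \<in> A" | (pendant) "u = w" | (rest) "u \<notin> A" "u \<noteq> w" by blast
  then show ?thesis
  proof cases
    case clique
    moreover have "real (card ({..<n} - {u})) = real n - 1" using u by (simp add: of_nat_diff)
    ultimately show ?thesis
      using row sums(1) eqs unfolding join_eigen_equations_def by (simp add: join_vector_def)
  next
    case pendant
    moreover have "(\<Sum>j\<in>A. ?x j) = real \<tau> - 1" "real (card A) = real \<tau> - 1"
      using card \<tau> by (simp_all add: join_vector_def of_nat_diff)
    ultimately show ?thesis
      using row A(3) eqs unfolding join_eigen_equations_def by (simp add: join_vector_def)
  next
    case rest
    moreover have "real (card ({..<n} - {u, w})) = real n - 2"
      using rest A(2) u by (simp add: card_Diff_subset of_nat_diff)
    ultimately show ?thesis
      using row sums(2) eqs unfolding join_eigen_equations_def by (simp add: join_vector_def)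
  qed
qed

lemma join_graph_extremal_shape:
  assumes "2 \<le> \<tau>" "\<tau> < n"
  shows "{..<\<tau> - 1} \<subseteq> {..<n}" "n - 1 < n" "n - 1 \<notin> {..<\<tau> - 1}" "card {..<\<tau> - 1} = \<tau> - 1"
  using assms by auto

lemma rho_alpha_extremal_graph_ge:
  assumes "2 \<le> \<tau>" "\<tau> < n" "join_eigen_equations \<alpha> n \<tau> lam p q"
  shows "lam \<le> rho_alpha \<alpha> n (extremal_graph \<tau> n)"
proof -
  let ?x = "join_vector {..<\<tau> - 1} (n - 1) p q"
  note eigvec = join_graph_eigenvector[OF join_graph_extremal_shape[OF assms(1,2)] assms]
  have "?x 0 \<noteq> 0" using assms(1) by (simp add: join_vector_def)
  hence "\<exists>i<n. ?x i \<noteq> 0" using assms(2) by (intro exI[of _ 0]) auto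
  hence "eigenvalue (A_alpha \<alpha> n (join_graph n {..<\<tau> - 1} (n - 1))) lam"
    unfolding eigenvalue_iff_sum[OF A_alpha_carrier] using eigvec by (intro exI[of _ ?x]) auto
  thus ?thesis unfolding extremal_graph_eq_join_graph by (rule eigenvalue_le_rho_alpha)
qed

lemma rho_alpha_less_of_spanning_subgraph:
  assumes E: "graph n E" "connected_graph n E" and H: "graph n H" and \<alpha>: "0 \<le> \<alpha>" "\<alpha> < 1"
    and sub: "\<And>i j. E i j \<Longrightarrow> H i j"
    and x: "\<And>i. i < n \<Longrightarrow> 0 < x i"
    and eig: "\<And>i. i < n \<Longrightarrow> (\<Sum>j<n. A_alpha \<alpha> n H $$ (i, j) * x j) = lam * x i"
  shows "rho_alpha \<alpha> n E < lam \<or> E = H"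
proof (rule disjCI)
  assume "E \<noteq> H"
  then obtain k b where "H k b" "\<not> E k b" using sub by blast
  hence k: "k < n" "b \<in> neighbours n H k" "b \<notin> neighbours n E k"
    using H unfolding graph_def neighbours_def by auto
  have x_nonneg: "0 \<le> x i" if "i < n" for i using x[OF that] by simp
  have nb: "neighbours n E u \<subseteq> neighbours n H u" "neighbours n H u \<subseteq> {..<n}" for u
    using sub unfolding neighbours_def by auto
  have row_H: "\<alpha> * real (card (neighbours n H u)) * x u + (1 - \<alpha>) * (\<Sum>j\<in>neighbours n H u. x j)
      = lam * x u" if "u < n" for u
    using eig[OF that] unfolding A_alpha_row[OF that] degree_eq_card_neighbours .
  have "(\<Sum>j<n. A_alpha \<alpha> n E $$ (i, j) * x j) \<le> lam * x i" if "i < n" for i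
    using A_alpha_row_le[where x = x, OF that nb \<alpha>(1) less_imp_le[OF \<alpha>(2)] x_nonneg] row_H[OF that]
    by simp
  moreover have "(\<Sum>j<n. A_alpha \<alpha> n E $$ (k, j) * x j) < lam * x k"
    using A_alpha_row_less[where x = x, OF k(1) nb \<alpha> x k(2,3)] row_H[OF k(1)] by simp
  ultimately show "rho_alpha \<alpha> n E < lam"
    by (intro rho_alpha_less[where x = x, OF E \<alpha> x _ k(1)])
qed

lemma extremal_or_rho_alpha_less_of_low_degree:
  assumes E: "graph n E" "connected_graph n E" and \<tau>: "2 \<le> \<tau>" "\<tau> < n" and \<alpha>: "0 \<le> \<alpha>" "\<alpha> < 1"
    and w: "w < n" "degree n E w < \<tau>"
    and pq: "0 < p" "0 < q" and eqs: "join_eigen_equations \<alpha> n \<tau> lam p q"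
  shows "graph_iso n E (extremal_graph \<tau> n) \<or> rho_alpha \<alpha> n E < lam"
proof -
  have "degree n E w \<le> \<tau> - 1" "\<tau> - 1 < n" using w(2) \<tau> by auto
  then obtain A where A: "A \<subseteq> {..<n} - {w}" "card A = \<tau> - 1"
    and sub: "\<forall>i j. E i j \<longrightarrow> join_graph n A w i j"
    using subgraph_join_graph_of_degree_le[OF E(1) w(1)] by blast
  have A': "A \<subseteq> {..<n}" "w \<notin> A" using A by auto
  have "rho_alpha \<alpha> n E < lam \<or> E = join_graph n A w"
  proof (rule rho_alpha_less_of_spanning_subgraph[OF E graph_join_graph \<alpha>])
    show "join_graph n A w i j" if "E i j" for i j using sub that by blast
    show "0 < join_vector A w p q i" for i using pq by (simp add: join_vector_def)
    show "(\<Sum>j<n. A_alpha \<alpha> n (join_graph n A w) $$ (i, j) * join_vector A w p q j)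
        = lam * join_vector A w p q i" if "i < n" for i
      using join_graph_eigenvector[OF A'(1) w(1) A'(2) A(2) \<tau> eqs that] .
  qed
  moreover have "graph_iso n (join_graph n A w) (extremal_graph \<tau> n)"
    unfolding extremal_graph_eq_join_graph using join_graph_extremal_shape[OF \<tau>] A(2)
    by (intro join_graph_iso[OF A'(1) w(1) A'(2)]) simp_all
  ultimately show ?thesis by blast
qed

section \<open>Graphs that are not \<open>\<tau>\<close>-tough\<close>

definition separator_vector :: "nat set \<Rightarrow> real \<Rightarrow> nat \<Rightarrow> real" where
  "separator_vector S y u = (if u \<in> S then 1 else y)"

lemma neighbours_subset_Un_component_of:
  assumes "graph n E" "u \<in> {..<n} - S"
  shows "neighbours n E u \<subseteq> S \<union> (component_of E ({..<n} - S) u - {u})"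
  using neighbours_inter_subset_component_of[OF assms(2), of n E] neighbours_subset[OF assms(1), of u]
  by blast

lemma A_alpha_row_separator_vector_in:
  assumes E: "graph n E" and S: "S \<subseteq> {..<n}" "u \<in> S" and \<alpha>: "0 \<le> \<alpha>" "\<alpha> \<le> 1" and "0 \<le> y"
  shows "(\<Sum>j<n. A_alpha \<alpha> n E $$ (u, j) * separator_vector S y j)
    \<le> \<alpha> * (real n - 1) + (1 - \<alpha>) * (real (card S) - 1 + real (card ({..<n} - S)) * y)"
proof -
  have "finite S" "u < n" using S finite_subset by auto
  hence "1 \<le> card S" using S(2) by (metis One_nat_def Suc_leI card_gt_0_iff empty_iff)
  have "{..<n} - {u} = (S - {u}) \<union> ({..<n} - S)" using S by auto
  hence "(\<Sum>j\<in>{..<n} - {u}. separator_vector S y j)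
      = (\<Sum>j\<in>S - {u}. separator_vector S y j) + (\<Sum>j\<in>{..<n} - S. separator_vector S y j)"
    using \<open>finite S\<close> by (simp only:) (intro sum.union_disjoint, auto)
  also have "\<dots> = real (card S) - 1 + real (card ({..<n} - S)) * y"
    using \<open>finite S\<close> S(2) \<open>1 \<le> card S\<close> by (simp add: separator_vector_def of_nat_diff)
  finally show ?thesis
    using A_alpha_row_le[OF \<open>u < n\<close> neighbours_subset[OF E] _ \<alpha>, of "separator_vector S y"]
      \<open>0 \<le> y\<close> S(2) \<open>u < n\<close> by (simp add: separator_vector_def of_nat_diff)
qed

lemma A_alpha_row_separator_vector_out:
  assumes E: "graph n E" and S: "S \<subseteq> {..<n}" and u: "u \<in> {..<n} - S"
    and \<alpha>: "0 \<le> \<alpha>" "\<alpha> \<le> 1" and "0 \<le> y"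
  defines "c \<equiv> card (component_of E ({..<n} - S) u)"
  shows "(\<Sum>j<n. A_alpha \<alpha> n E $$ (u, j) * separator_vector S y j)
    \<le> \<alpha> * (real (card S) + real c - 1) * y + (1 - \<alpha>) * (real (card S) + (real c - 1) * y)"
proof -
  let ?C = "component_of E ({..<n} - S) u"
  have "finite S" using S finite_subset by blast
  have "?C \<subseteq> {..<n} - S" by (rule component_of_subset)
  hence "finite ?C" using finite_subset by blast
  have "u \<in> ?C" using u by (rule component_of_self)
  have "neighbours n E u \<subseteq> S \<union> (?C - {u})" by (rule neighbours_subset_Un_component_of[OF E u])
  moreover have "S \<union> (?C - {u}) \<subseteq> {..<n}" using S \<open>?C \<subseteq> _\<close> by auto
  moreover have "1 \<le> c" using \<open>finite ?C\<close> \<open>u \<in> ?C\<close> unfolding c_def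
    by (metis One_nat_def Suc_leI card_gt_0_iff empty_iff)
  moreover have "S \<inter> (?C - {u}) = {}" using \<open>?C \<subseteq> _\<close> by auto
  hence "card (S \<union> (?C - {u})) = card S + (c - 1)"
    using \<open>finite S\<close> \<open>finite ?C\<close> \<open>u \<in> ?C\<close> unfolding c_def by (simp add: card_Un_disjoint)
  moreover have "(\<Sum>j\<in>?C - {u}. separator_vector S y j) = (\<Sum>j\<in>?C - {u}. y)"
    using \<open>?C \<subseteq> _\<close> by (intro sum.cong) (auto simp: separator_vector_def)
  hence "(\<Sum>j\<in>S \<union> (?C - {u}). separator_vector S y j) = real (card S) + (real c - 1) * y"
    using \<open>S \<inter> (?C - {u}) = {}\<close> \<open>finite S\<close> \<open>finite ?C\<close> \<open>u \<in> ?C\<close> \<open>1 \<le> c\<close> unfolding c_def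
    by (simp add: sum.union_disjoint separator_vector_def of_nat_diff)
  ultimately show ?thesis
    using A_alpha_row_le[of u n E "S \<union> (?C - {u})" \<alpha> "separator_vector S y"] u \<alpha> \<open>0 \<le> y\<close>
    by (simp add: separator_vector_def of_nat_diff)
qed

lemma separator_weight:
  fixes k s N \<beta> :: real
  assumes "0 < \<beta> * s" "0 \<le> k" "\<beta> * s \<le> k * (\<beta> * N - 1)"
  defines "y \<equiv> \<beta> * s / (k + \<beta> * s)"
  shows "0 < y" and "\<beta> * N * y \<le> \<beta> * N - 1" and "k \<le> d \<Longrightarrow> \<beta> * s \<le> y * (d + \<beta> * s)"
proof -
  have "0 < k + \<beta> * s" using assms(1,2) by simp
  hence y: "y * (k + \<beta> * s) = \<beta> * s" unfolding y_def by simp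
  show "0 < y" unfolding y_def using assms(1) \<open>0 < k + \<beta> * s\<close> by simp
  have "((\<beta> * N - 1) - \<beta> * N * y) * (k + \<beta> * s)
      = (\<beta> * N - 1) * (k + \<beta> * s) - \<beta> * N * (y * (k + \<beta> * s))"
    by (simp add: algebra_simps)
  also have "\<dots> = k * (\<beta> * N - 1) - \<beta> * s" unfolding y by (simp add: algebra_simps)
  finally have "0 \<le> ((\<beta> * N - 1) - \<beta> * N * y) * (k + \<beta> * s)" using assms(3) by linarith
  with \<open>0 < k + \<beta> * s\<close> show "\<beta> * N * y \<le> \<beta> * N - 1" by (simp add: zero_le_mult_iff)
  assume "k \<le> d"
  hence "y * (k + \<beta> * s) \<le> y * (d + \<beta> * s)" using \<open>0 < y\<close> by (intro mult_left_mono) auto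
  with y show "\<beta> * s \<le> y * (d + \<beta> * s)" by simp
qed

text \<open>Test vector: 1 on S and the weight \<open>y\<close> above elsewhere, with \<open>\<beta> = 1 - \<alpha>\<close>.\<close>

lemma rho_alpha_le_of_small_components:
  assumes E: "graph n E" and S: "S \<subseteq> {..<n}" "S \<noteq> {}" and \<alpha>: "0 \<le> \<alpha>" "\<alpha> < 1"
    and small: "\<And>u. u \<in> {..<n} - S \<Longrightarrow>
      card (component_of E ({..<n} - S) u) + k + 1 \<le> card ({..<n} - S)"
    and slack: "(1 - \<alpha>) * real (card S) \<le> real k * ((1 - \<alpha>) * real (card ({..<n} - S)) - 1)"
  shows "rho_alpha \<alpha> n E \<le> real n - 2"
proof -
  define \<beta> s N where "\<beta> = 1 - \<alpha>" and "s = real (card S)" and "N = real (card ({..<n} - S))"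
  define y where "y = \<beta> * s / (k + \<beta> * s)"
  have "finite S" using S(1) finite_subset by blast
  moreover have "card S \<le> n" using card_mono[OF finite_lessThan S(1)] by simp
  ultimately have "real n = N + s" "1 \<le> s" using S unfolding N_def s_def
    by (simp_all add: card_Diff_subset of_nat_diff Suc_le_eq card_gt_0_iff)
  have "0 < \<beta> * s" using \<alpha> \<open>1 \<le> s\<close> unfolding \<beta>_def by simp
  note weight = separator_weight[OF this _ slack[folded \<beta>_def s_def N_def], folded y_def, simplified]
  show ?thesis
  proof (rule rho_alpha_le[OF E _ \<alpha>(1) less_imp_le[OF \<alpha>(2)]])
    show "0 < n" using S by auto
    show "0 < separator_vector S y i" for i using weight(1) by (simp add: separator_vector_def)
    show "(\<Sum>j<n. A_alpha \<alpha> n E $$ (u, j) * separator_vector S y j)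
        \<le> (real n - 2) * separator_vector S y u" if "u < n" for u
    proof (cases "u \<in> S")
      case True
      with A_alpha_row_separator_vector_in[OF E S(1) True \<alpha>(1) _ less_imp_le[OF weight(1)]]
      show ?thesis
        using weight(2) \<alpha> \<open>real n = N + s\<close> unfolding \<beta>_def N_def s_def separator_vector_def
        by (simp add: algebra_simps)
    next
      case False
      hence u: "u \<in> {..<n} - S" using that by simp
      define c where "c = real (card (component_of E ({..<n} - S) u))"
      have "real k \<le> N - c - 1" using small[OF u] unfolding N_def c_def by linarith
      hence "\<beta> * s \<le> y * (N - c - 1 + \<beta> * s)" by (rule weight(3))
      moreover have "(real n - 2) * y - (\<alpha> * (s + c - 1) * y + \<beta> * (s + (c - 1) * y))
          = y * (N - c - 1 + \<beta> * s) - \<beta> * s"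
        using \<open>real n = N + s\<close> unfolding \<beta>_def by (simp add: algebra_simps)
      ultimately show ?thesis
        using A_alpha_row_separator_vector_out[OF E S(1) u \<alpha>(1) _ less_imp_le[OF weight(1)]] False \<alpha>
        unfolding c_def s_def \<beta>_def separator_vector_def by auto
    qed
  qed
qed

lemma two_le_card_component_of:
  assumes E: "graph n E" and S: "S \<subseteq> {..<n}" and u: "u \<in> {..<n} - S"
    and deg: "card S < degree n E u"
  shows "2 \<le> card (component_of E ({..<n} - S) u)"
proof -
  let ?C = "component_of E ({..<n} - S) u"
  have "finite S" using S finite_subset by blast
  have "finite ?C" using finite_subset[OF component_of_subset] by blast
  have "u \<in> ?C" using u by (rule component_of_self)
  have "degree n E u \<le> card (S \<union> (?C - {u}))"
    unfolding degree_eq_card_neighbours using \<open>finite S\<close> \<open>finite ?C\<close>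
    by (intro card_mono neighbours_subset_Un_component_of[OF E u]) auto
  also have "\<dots> \<le> card S + card (?C - {u})" by (rule card_Un_le)
  finally show ?thesis using deg \<open>finite ?C\<close> \<open>u \<in> ?C\<close> by (simp add: card_Diff_singleton)
qed

lemma card_component_of_le_of_min_degree:
  assumes E: "graph n E" and S: "S \<subseteq> {..<n}" and u: "u \<in> {..<n} - S"
    and two: "2 \<le> num_components E ({..<n} - S)"
    and deg: "\<And>v. v \<in> {..<n} - S \<Longrightarrow> card S < degree n E v"
  shows "card (component_of E ({..<n} - S) u) + 2 \<le> card ({..<n} - S)"
proof -
  let ?T = "{..<n} - S" and ?C = "component_of E ({..<n} - S)"
  have "card (?C u) < card ?T" using card_component_of_le[OF E _ u] two by simp
  hence "?C u \<noteq> ?T" by (intro notI) simp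
  then obtain v where v: "v \<in> ?T" "v \<notin> ?C u" using component_of_subset by blast
  have "?C v \<inter> ?C u = {}"
    using component_of_eq[OF E] component_of_self[OF v(1)] v(2) by blast
  hence "card (?C u) + card (?C v) = card (?C u \<union> ?C v)"
    using finite_subset[OF component_of_subset] by (simp add: card_Un_disjoint inf_commute)
  also have "\<dots> \<le> card ?T" by (simp add: card_mono component_of_subset)
  finally show ?thesis using two_le_card_component_of[OF E S v(1) deg[OF v(1)]] by linarith
qed

lemma not_tough_slack_two_components:
  fixes t s N \<beta> :: real
  assumes "2 \<le> t" "1/4 < \<beta>" "4 * t\<^sup>2 + 5 * t + 1 \<le> N + s" "s + 1 \<le> t"
  shows "\<beta> * s \<le> \<beta> * N - 1"
proof -
  have "0 \<le> t\<^sup>2" by simp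
  hence "4 \<le> N - s" using assms by linarith
  hence "\<beta> * 4 \<le> \<beta> * (N - s)" using assms(2) by (intro mult_left_mono) auto
  thus ?thesis using assms(2) by (simp add: algebra_simps)
qed

lemma not_tough_slack_many_components:
  fixes t s c N \<beta> :: real
  assumes t: "2 \<le> t" and \<beta>: "1/4 < \<beta>" and n: "4 * t\<^sup>2 + 5 * t + 1 \<le> N + s"
    and s: "s + 1 \<le> t * (c - 1)" and c: "3 \<le> c" "c \<le> N"
  shows "\<beta> * s \<le> (c - 2) * (\<beta> * N - 1)"
proof -
  have "t * c \<le> t * N" using c t by (intro mult_left_mono) auto
  moreover have "(t + 1) * (4 * t + 2) = 4 * t\<^sup>2 + 6 * t + 2" "(t + 1) * N = t * N + N"
    "t * (c - 1) = t * c - t"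
    by (simp_all add: power2_eq_square algebra_simps)
  ultimately have "(t + 1) * (4 * t + 2) \<le> (t + 1) * N" using n s by linarith
  hence "4 * t + 2 \<le> N" using mult_le_cancel_left_pos[of "t + 1" "4 * t + 2" N] t by simp
  hence "\<beta> * (4 * t + 2) \<le> \<beta> * N" using \<beta> by (intro mult_left_mono) auto
  moreover have "\<beta> * 2 \<le> \<beta> * t" using t \<beta> by (intro mult_left_mono) auto
  moreover have "\<beta> * (4 * t + 2) = 4 * (\<beta> * t) + 2 * \<beta>" by (simp add: algebra_simps)
  ultimately have "2 * (\<beta> * t) \<le> \<beta> * N - 1" using \<beta> by linarith
  hence "(c - 2) * (2 * (\<beta> * t)) \<le> (c - 2) * (\<beta> * N - 1)"
    using c by (intro mult_left_mono) auto
  moreover have "(c - 1) * (\<beta> * t) \<le> (c - 2) * 2 * (\<beta> * t)"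
    using c t \<beta> by (intro mult_right_mono) auto
  moreover have "\<beta> * (s + 1) \<le> \<beta> * (t * (c - 1))" using s \<beta> by (intro mult_left_mono) auto
  moreover have "\<beta> * (t * (c - 1)) = (c - 1) * (\<beta> * t)" "\<beta> * (s + 1) = \<beta> * s + \<beta>"
    "(c - 2) * 2 * (\<beta> * t) = (c - 2) * (2 * (\<beta> * t))"
    by (simp_all add: algebra_simps)
  ultimately show ?thesis using \<beta> by linarith
qed

lemma not_tough_separator:
  assumes "connected_graph n E" "\<not> tough (real \<tau>) n E"
  obtains S where "S \<subseteq> {..<n}" "S \<noteq> {}" "2 \<le> num_components E ({..<n} - S)"
    "card S + 1 \<le> \<tau> * (num_components E ({..<n} - S) - 1)"
proof -
  obtain S where S: "S \<subset> {..<n}" and c: "1 < num_components E ({..<n} - S)"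
    and lt: "real (card S) < real \<tau> * (real (num_components E ({..<n} - S)) - 1)"
    using assms(2) unfolding tough_def atLeast0LessThan by (auto simp: not_le)
  have "S \<noteq> {}" using assms(1) c unfolding connected_graph_def atLeast0LessThan by auto
  have "real (card S) < real (\<tau> * (num_components E ({..<n} - S) - 1))"
    using lt c by (simp add: of_nat_diff)
  hence "card S + 1 \<le> \<tau> * (num_components E ({..<n} - S) - 1)"
    by (simp only: of_nat_less_iff Suc_eq_plus1[symmetric] Suc_le_eq)
  with S c \<open>S \<noteq> {}\<close> show ?thesis by (intro that) auto
qed

lemma small_components_of_separator:
  assumes E: "graph n E" and \<tau>: "2 \<le> \<tau>" and \<beta>: "1/4 < \<beta>"
    and n: "4 * real \<tau> ^ 2 + 5 * real \<tau> + 1 \<le> real n"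
    and deg: "\<And>w. w < n \<Longrightarrow> \<tau> \<le> degree n E w"
    and S: "S \<subseteq> {..<n}" and c: "2 \<le> num_components E ({..<n} - S)"
    and s: "card S + 1 \<le> \<tau> * (num_components E ({..<n} - S) - 1)"
  obtains k where
    "\<And>u. u \<in> {..<n} - S \<Longrightarrow> card (component_of E ({..<n} - S) u) + k + 1 \<le> card ({..<n} - S)"
    "\<beta> * real (card S) \<le> real k * (\<beta> * real (card ({..<n} - S)) - 1)"
proof -
  define T c where "T = {..<n} - S" and "c = num_components E T"
  have "finite S" "finite T" using S finite_subset unfolding T_def by auto
  have "card S \<le> n" using card_mono[OF finite_lessThan S] by simp
  hence "real n = real (card T) + real (card S)"
    using S \<open>finite S\<close> unfolding T_def by (simp add: card_Diff_subset of_nat_diff)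
  have "1 \<le> c" using c unfolding c_def T_def by simp
  moreover have "real (card S + 1) \<le> real (\<tau> * (c - 1))"
    using s unfolding c_def T_def by (simp only: of_nat_le_iff)
  ultimately have "real (card S) + 1 \<le> real \<tau> * (real c - 1)" by (simp add: of_nat_diff)
  have "T \<noteq> {}" using c unfolding T_def num_components_def components_eq_image by (intro notI) simp
  then obtain u0 where "u0 \<in> T" by blast
  hence "1 \<le> card (component_of E T u0)"
    using \<open>finite T\<close> finite_subset[OF component_of_subset] component_of_self
    by (metis One_nat_def Suc_leI card_gt_0_iff empty_iff)
  hence "c \<le> card T"
    using card_component_of_le[OF E \<open>finite T\<close> \<open>u0 \<in> T\<close>] c unfolding c_def T_def by linarith
  show ?thesis
  proof (cases "c = 2")
    case True
    hence "card S < degree n E v" if "v \<in> T" for v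
      using deg[of v] that s unfolding c_def T_def by simp
    with True show ?thesis
      using card_component_of_le_of_min_degree[OF E S] c
        not_tough_slack_two_components[of "real \<tau>" \<beta> "real (card T)" "real (card S)"]
        \<tau> \<beta> n \<open>real n = _\<close> \<open>real (card S) + 1 \<le> _\<close>
      by (intro that[of 1]) (auto simp: T_def c_def)
  next
    case False
    with c have "3 \<le> c" unfolding c_def T_def by simp
    show ?thesis
    proof (rule that[of "c - 2"])
      show "card (component_of E ({..<n} - S) u) + (c - 2) + 1 \<le> card ({..<n} - S)"
        if "u \<in> {..<n} - S" for u
        using card_component_of_le[OF E \<open>finite T\<close>, of u] that \<open>3 \<le> c\<close> unfolding c_def T_def by simp
      show "\<beta> * real (card S) \<le> real (c - 2) * (\<beta> * real (card ({..<n} - S)) - 1)"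
        using not_tough_slack_many_components[of "real \<tau>" \<beta> "real (card T)" "real (card S)" "real c"]
          \<tau> \<beta> n \<open>real n = _\<close> \<open>real (card S) + 1 \<le> _\<close> \<open>3 \<le> c\<close> \<open>c \<le> card T\<close>
        unfolding T_def by (simp add: of_nat_diff)
    qed
  qed
qed

lemma rho_alpha_le_of_not_tough:
  assumes E: "graph n E" "connected_graph n E" and \<tau>: "2 \<le> \<tau>" and \<alpha>: "0 \<le> \<alpha>" "\<alpha> < 3/4"
    and n: "4 * real \<tau> ^ 2 + 5 * real \<tau> + 1 \<le> real n"
    and deg: "\<And>w. w < n \<Longrightarrow> \<tau> \<le> degree n E w"
    and not_tough: "\<not> tough (real \<tau>) n E"
  shows "rho_alpha \<alpha> n E \<le> real n - 2"
proof -
  obtain S where S: "S \<subseteq> {..<n}" "S \<noteq> {}" "2 \<le> num_components E ({..<n} - S)"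
    "card S + 1 \<le> \<tau> * (num_components E ({..<n} - S) - 1)"
    using not_tough_separator[OF E(2) not_tough] by blast
  have "1/4 < 1 - \<alpha>" "\<alpha> < 1" using \<alpha>(2) by simp_all
  then obtain k where
    "\<And>u. u \<in> {..<n} - S \<Longrightarrow> card (component_of E ({..<n} - S) u) + k + 1 \<le> card ({..<n} - S)"
    "(1 - \<alpha>) * real (card S) \<le> real k * ((1 - \<alpha>) * real (card ({..<n} - S)) - 1)"
    using small_components_of_separator[OF E(1) \<tau> _ n deg S(1,3,4)] by metis
  from rho_alpha_le_of_small_components[OF E(1) S(1,2) \<alpha>(1) \<open>\<alpha> < 1\<close> this] show ?thesis .
qed

theorem theorem1p2:
  fixes n \<tau> :: nat and E :: "nat \<Rightarrow> nat \<Rightarrow> bool" and \<alpha> :: real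
  assumes "graph n E" and "connected_graph n E"
    and "\<tau> \<ge> 2"
    and "1/2 \<le> \<alpha>" and "\<alpha> < 3/4"
    and "real n \<ge> 4 * real \<tau>^2 + 5 * real \<tau> + 1"
    and "real n \<ge> (8 * real \<tau> * (1 - \<alpha>) - 2 * \<alpha> + 1) / (3 - 4 * \<alpha>)"
    and "rho_alpha \<alpha> n E \<ge> rho_alpha \<alpha> n (extremal_graph \<tau> n)"
  shows "tough (real \<tau>) n E \<or> graph_iso n E (extremal_graph \<tau> n)"
proof -
  have "0 \<le> real \<tau> ^ 2" by simp
  hence "\<tau> < n" using assms(6) by linarith
  have \<alpha>: "0 \<le> \<alpha>" "\<alpha> < 1" using assms(4,5) by auto
  obtain lam p q where lam: "real n - 2 < lam" "0 < p" "0 < q" "join_eigen_equations \<alpha> n \<tau> lam p q"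
    using join_eigen_equations_solvable[of "real \<tau>" "real n" \<alpha>] assms(3) \<open>\<tau> < n\<close> \<alpha> by auto
  have "lam \<le> rho_alpha \<alpha> n E"
    using rho_alpha_extremal_graph_ge[OF assms(3) \<open>\<tau> < n\<close> lam(4)] assms(8) by linarith
  show ?thesis
  proof (rule disjCI)
    assume "\<not> graph_iso n E (extremal_graph \<tau> n)"
    hence "\<tau> \<le> degree n E w" if "w < n" for w
      using extremal_or_rho_alpha_less_of_low_degree[OF assms(1,2,3) \<open>\<tau> < n\<close> \<alpha> that _ lam(2-4)] \<open>lam \<le> rho_alpha \<alpha> n E\<close>
      by (meson not_le not_less)
    thus "tough (real \<tau>) n E"
      using rho_alpha_le_of_not_tough[OF assms(1-3) \<alpha>(1) assms(5,6)] lam(1) \<open>lam \<le> rho_alpha \<alpha> n E\<close>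
      by fastforce
  qed
qed

end
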